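(* For every integer $l\ge 3$ there exists a (non-monotone) search $\tilde c$-strategy that cleans the tree $T_l$ using $3$ searchers, one of each color $1,2,3$.
   Context: An edge-labeled graph $G=(V(G),E(G),c)$ is a simple graph with $c\colon E(G)\to\{1,\dots,k\}$; $c(v)$ denotes the set of colors of edges incident to $v$. Edge search: a search strategy is a sequence of moves: placing a searcher on a vertex, removing a searcher from a vertex, or sliding a searcher from $u$ along an edge $\{u,v\}$ to $v$. Initially all edges are contaminated; a slide along an edge makes it clean; after every move, a clean edge $e$ becomes contaminated if some path with no searcher-occupied vertex joins an endpoint of $e$ to an endpoint of a contaminated edge. The strategy must end with all edges clean; it uses $k$ searchers if at most $k$ are simultaneously present. In a search $\tilde c$-strategy each searcher $j$ has a fixed color $\tilde c(j)$, may be placed on $v$ only if $\tilde c(j)\in c(v)$, and may slide along $e$ only if $\tilde c(j)=c(e)$. The tree $T_l$ ($l\ge 3$), with colors $\{1,2,3\}$: For $i\in\{1,2\}$, $T'_i$ has root $q_i$ with three children joined to $q_i$ by edges of color 1, and each of these children has three children joined by edges of color 2. $T''_l$: a path $v_0,v_1,\dots,v_{l+1}$ with edges $e_x=\{v_x,v_{x+1}\}$ of color $(x \bmod 3)+1$ for $x\in\{0,\dots,l\}$; additionally, for each $x\in\{1,\dots,l\}$, attach to $v_x$ one pendant edge of color $(x\bmod 3)+1$ and one pendant edge of color $((x-1)\bmod 3)+1$. Let $P$ be a path $p_0p_1p_2p_3p_4$ with edges $\{p_0,p_1\},\{p_3,p_4\}$ of color 3 and $\{p_1,p_2\},\{p_2,p_3\}$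 of color 2. $T_l$ is obtained from disjoint copies of $T'_1,T'_2,T''_l,P$ by identifying $p_2$ with $v_0$, $p_0$ with $q_1$, and $p_4$ with $q_2$. *)

theory Defs
  imports Main
begin

text \<open>A configuration is a pair (pos, K): pos j is the vertex occupied by
searcher j (None if searcher j is currently not on the graph), and K is the
set of clean edges.\<close>

datatype 'v move = Place nat 'v | Remove nat | Slide nat 'v 'v

definition vcolors :: "'v set set \<Rightarrow> ('v set \<Rightarrow> nat) \<Rightarrow> 'v \<Rightarrow> nat set" where
  "vcolors E c v = {c e | e. e \<in> E \<and> v \<in> e}"

definition occupied :: "(nat \<Rightarrow> 'v option) \<Rightarrow> 'v set" where
  "occupied pos = {v. \<exists>j. pos j = Some v}"

definition free_conn :: "'v set set \<Rightarrow> 'v set \<Rightarrow> 'v \<Rightarrow> 'v \<Rightarrow> bool" where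
  "free_conn E Occ x y \<longleftrightarrow> x \<notin> Occ \<and>
     (\<lambda>a b. {a, b} \<in> E \<and> a \<notin> Occ \<and> b \<notin> Occ)\<^sup>*\<^sup>* x y"

definition recont :: "'v set set \<Rightarrow> 'v set \<Rightarrow> 'v set set \<Rightarrow> 'v set set" where
  "recont E Occ K = K - {e \<in> K. \<exists>x \<in> e. \<exists>f \<in> E - K. \<exists>y \<in> f. free_conn E Occ x y}"

fun step :: "'v set set \<Rightarrow> ('v set \<Rightarrow> nat) \<Rightarrow> nat set \<Rightarrow> (nat \<Rightarrow> nat)
    \<Rightarrow> (nat \<Rightarrow> 'v option) \<times> 'v set set \<Rightarrow> 'v move
    \<Rightarrow> ((nat \<Rightarrow> 'v option) \<times> 'v set set) option" where
  "step E c S ct (pos, K) (Place j v) =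
     (if j \<in> S \<and> pos j = None \<and> ct j \<in> vcolors E c v
      then Some (pos(j := Some v), recont E (occupied (pos(j := Some v))) K)
      else None)"
| "step E c S ct (pos, K) (Remove j) =
     (if j \<in> S \<and> pos j \<noteq> None
      then Some (pos(j := None), recont E (occupied (pos(j := None))) K)
      else None)"
| "step E c S ct (pos, K) (Slide j u v) =
     (if j \<in> S \<and> pos j = Some u \<and> {u, v} \<in> E \<and> ct j = c {u, v}
      then Some (pos(j := Some v),
                 recont E (occupied (pos(j := Some v))) (K \<union> {{u, v}}))
      else None)"

fun run :: "'v set set \<Rightarrow> ('v set \<Rightarrow> nat) \<Rightarrow> nat set \<Rightarrow> (nat \<Rightarrow> nat)
    \<Rightarrow> (nat \<Rightarrow> 'v option) \<times> 'v set set \<Rightarrow> 'v move list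
    \<Rightarrow> ((nat \<Rightarrow> 'v option) \<times> 'v set set) option" where
  "run E c S ct st [] = Some st"
| "run E c S ct st (m # ms) =
     (case step E c S ct st m of None \<Rightarrow> None | Some st' \<Rightarrow> run E c S ct st' ms)"

text \<open>No monotonicity is required.\<close>
definition search_strategy :: "'v set set \<Rightarrow> ('v set \<Rightarrow> nat) \<Rightarrow> nat set \<Rightarrow> (nat \<Rightarrow> nat)
    \<Rightarrow> 'v move list \<Rightarrow> bool" where
  "search_strategy E c S ct ms \<longleftrightarrow>
     (\<exists>pos. run E c S ct (\<lambda>_. None, {}) ms = Some (pos, E))"

text \<open>Vertices: Q i = q_i (= p_0 for i=1, = p_4 for i=2); A i j = children of q_i;
B i j k = children of A i j; Pv 1 = p_1, Pv 3 = p_3; V x = v_x (V 0 = p_2);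
W x b = the two pendant vertices attached to v_x.\<close>
datatype tv = Q nat | A nat nat | B nat nat nat | Pv nat | V nat | W nat nat

definition T_labeled :: "nat \<Rightarrow> (tv set \<times> nat) set" where
  "T_labeled l =
     {({Q i, A i j}, 1) | i j. i \<in> {1, 2} \<and> j < 3}
   \<union> {({A i j, B i j k}, 2) | i j k. i \<in> {1, 2} \<and> j < 3 \<and> k < 3}
   \<union> {({Q 1, Pv 1}, 3), ({Pv 1, V 0}, 2), ({V 0, Pv 3}, 2), ({Pv 3, Q 2}, 3)}
   \<union> {({V x, V (x + 1)}, x mod 3 + 1) | x. x \<le> l}
   \<union> {({V x, W x 0}, x mod 3 + 1) | x. 1 \<le> x \<and> x \<le> l}
   \<union> {({V x, W x 1}, (x - 1) mod 3 + 1) | x. 1 \<le> x \<and> x \<le> l}"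

definition T_edges :: "nat \<Rightarrow> tv set set" where
  "T_edges l = fst ` T_labeled l"

definition T_color :: "nat \<Rightarrow> tv set \<Rightarrow> nat" where
  "T_color l e = (THE k. (e, k) \<in> T_labeled l)"

end

theory Submission
  imports Defs
begin

(* Searcher 3 waits on q_1 while searchers 1 and 2 clean the three branches of T'_1. Then the
   searchers walk down the spine v_0 v_1 ... v_(l+1). Arriving at v_x, the free searcher, whose
   colour is that of e_x, cleans the pendant edge of its colour; the searcher standing on v_x,
   which came along e_(x-1), cleans the other pendant edge; then the free searcher slides along
   e_x. The third searcher guards q_2 or p_3 so that T'_2 cannot recontaminate the clean part.
   The roles rotate with period 3, and once per period q_2 has to be released, recontaminating
   the edge p_3 q_2, which is why the strategy is not monotone. Finally T'_2 is cleaned like T'_1.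

   Correctness rests on one invariant: every vertex incident to a clean and to a contaminated
   edge is occupied. While it holds nothing is recontaminated, so each move can be checked
   locally, on the boundary of the clean region. *)

section \<open>Clean regions and recontamination\<close>

definition induced_edges :: "'v set set \<Rightarrow> 'v set \<Rightarrow> 'v set set" where
  "induced_edges E X = {e \<in> E. e \<subseteq> X}"

definition boundary :: "'v set set \<Rightarrow> 'v set \<Rightarrow> 'v set" where
  "boundary E X = {v \<in> X. \<exists>f\<in>E. v \<in> f \<and> \<not> f \<subseteq> X}"

lemma boundary_subset: "boundary E X \<subseteq> X"
  unfolding boundary_def by blast

lemma boundary_subset_iff:
  "boundary E X \<subseteq> Occ \<longleftrightarrow> (\<forall>f\<in>E. \<forall>v\<in>f. v \<in> X \<longrightarrow> v \<notin> Occ \<longrightarrow> f \<subseteq> X)"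
  unfolding boundary_def by blast

lemma boundary_subsetI:
  assumes "boundary E X \<subseteq> Y" "X \<subseteq> X'"
    and "\<forall>v\<in>(X' - X) \<union> Y. v \<in> X' \<longrightarrow> v \<notin> Occ \<longrightarrow> (\<forall>f\<in>E. v \<in> f \<longrightarrow> f \<subseteq> X')"
  shows "boundary E X' \<subseteq> Occ"
  using assms unfolding boundary_def by blast

lemma induced_edges_eq_iff: "induced_edges E X = E \<longleftrightarrow> (\<forall>f\<in>E. f \<subseteq> X)"
  unfolding induced_edges_def by blast

lemma induced_edges_insert:
  assumes "{u, v} \<in> E" "u \<in> X" "\<forall>f\<in>E. v \<in> f \<longrightarrow> f \<subseteq> insert v X \<longrightarrow> f = {u, v}"
  shows "induced_edges E (insert v X) = induced_edges E X \<union> {{u, v}}"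
  using assms unfolding induced_edges_def by blast

definition frontier :: "'v set set \<Rightarrow> 'v set set \<Rightarrow> 'v set" where
  "frontier E K = {v. (\<exists>e\<in>K. v \<in> e) \<and> (\<exists>f\<in>E - K. v \<in> f)}"

lemma frontier_induced_edges_subset_boundary:
  "frontier E (induced_edges E X) \<subseteq> boundary E X"
  unfolding frontier_def boundary_def induced_edges_def by blast

lemma boundary_contaminated_edge:
  "x \<in> boundary E X \<Longrightarrow> \<exists>f\<in>E - induced_edges E X. x \<in> f"
  unfolding boundary_def induced_edges_def by blast

lemma free_path_avoids_contaminated:
  assumes frontier: "frontier E K \<subseteq> Occ"
    and path: "(\<lambda>a b. {a, b} \<in> E \<and> a \<notin> Occ \<and> b \<notin> Occ)\<^sup>*\<^sup>* x y"
    and x: "x \<in> e" "e \<in> K" "x \<notin> Occ"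
  shows "\<forall>f\<in>E - K. y \<notin> f"
  using path
proof (induction rule: rtranclp_induct)
  case base
  show ?case using frontier x unfolding frontier_def by blast
next
  case (step z w)
  show ?case
  proof (cases "{z, w} \<in> K")
    case True
    then show ?thesis using frontier step.hyps(2) unfolding frontier_def by blast
  next
    case False
    then show ?thesis using step.IH step.hyps(2) by blast
  qed
qed

lemma recont_eq:
  assumes "K' \<subseteq> K" and "frontier E K' \<subseteq> Occ"
    and "\<forall>e\<in>K - K'. \<exists>x\<in>e. x \<notin> Occ \<and> (\<exists>f\<in>E - K. x \<in> f)"
  shows "recont E Occ K = K'"
proof -
  have "K' \<subseteq> recont E Occ K"
  proof
    fix e assume e: "e \<in> K'"
    have "\<not> free_conn E Occ x y" if "x \<in> e" "f \<in> E - K" "y \<in> f" for x f y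
      using free_path_avoids_contaminated[OF assms(2), of x y e] e that assms(1)
      unfolding free_conn_def by blast
    then show "e \<in> recont E Occ K" using e assms(1) unfolding recont_def by blast
  qed
  moreover have "recont E Occ K \<subseteq> K'"
  proof
    fix e assume e: "e \<in> recont E Occ K"
    show "e \<in> K'"
    proof (rule ccontr)
      assume "e \<notin> K'"
      moreover have "e \<in> K" using e unfolding recont_def by blast
      ultimately obtain x f where "x \<in> e" "x \<notin> Occ" "f \<in> E - K" "x \<in> f"
        using assms(3) by blast
      then have "free_conn E Occ x x" unfolding free_conn_def by simp
      then show False using e \<open>x \<in> e\<close> \<open>f \<in> E - K\<close> \<open>x \<in> f\<close> unfolding recont_def by blast
    qed
  qed
  ultimately show ?thesis by blast
qed

definition guarded :: "'v set set \<Rightarrow> (nat \<Rightarrow> 'v option) \<times> 'v set set \<Rightarrow> bool" where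
  "guarded E s \<longleftrightarrow> frontier E (snd s) \<subseteq> occupied (fst s)"

(* Relative to a guarded start state, so that a Place move, which cannot break the invariant,
   needs no side condition and segments compose without re-checking the state between them. *)
definition guarded_run :: "'v set set \<Rightarrow> ('v set \<Rightarrow> nat) \<Rightarrow> nat set \<Rightarrow> (nat \<Rightarrow> nat)
    \<Rightarrow> (nat \<Rightarrow> 'v option) \<times> 'v set set \<Rightarrow> 'v move list
    \<Rightarrow> (nat \<Rightarrow> 'v option) \<times> 'v set set \<Rightarrow> bool" where
  "guarded_run E c J ct s ms s' \<longleftrightarrow>
     (guarded E s \<longrightarrow> run E c J ct s ms = Some s' \<and> guarded E s')"

lemma run_append:
  "run E c J ct s (xs @ ys) = (case run E c J ct s xs of None \<Rightarrow> None | Some s' \<Rightarrow> run E c J ct s' ys)"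
  by (induction xs arbitrary: s) (auto split: option.splits)

lemma guarded_run_Nil:
  "pos = pos' \<Longrightarrow> X = X'
    \<Longrightarrow> guarded_run E c J ct (pos, induced_edges E X) [] (pos', induced_edges E X')"
  unfolding guarded_run_def by simp

lemma guarded_run_append:
  "guarded_run E c J ct s xs s' \<Longrightarrow> guarded_run E c J ct s' ys s''
    \<Longrightarrow> guarded_run E c J ct s (xs @ ys) s''"
  unfolding guarded_run_def by (simp add: run_append)

lemma guarded_run_Cons:
  assumes "guarded E s \<Longrightarrow> step E c J ct s m = Some s' \<and> guarded E s'"
    and "guarded_run E c J ct s' ms s''"
  shows "guarded_run E c J ct s (m # ms) s''"
  using assms unfolding guarded_run_def by (cases s) auto

lemma occupied_subset_upd: "occupied pos \<subseteq> occupied (pos(j := Some v))" if "pos j = None"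
proof
  fix w assume "w \<in> occupied pos"
  then obtain i where "pos i = Some w" unfolding occupied_def by blast
  moreover have "i \<noteq> j" using that calculation by auto
  ultimately have "(pos(j := Some v)) i = Some w" by simp
  then show "w \<in> occupied (pos(j := Some v))" unfolding occupied_def by blast
qed

lemma guarded_run_Place:
  assumes "j \<in> J" "pos j = None" "ct j \<in> vcolors E c v"
    and "guarded_run E c J ct (pos(j := Some v), K) ms s'"
  shows "guarded_run E c J ct (pos, K) (Place j v # ms) s'"
proof (rule guarded_run_Cons[OF _ assms(4)])
  assume "guarded E (pos, K)"
  then have "frontier E K \<subseteq> occupied (pos(j := Some v))"
    using occupied_subset_upd[of pos j v, OF assms(2)] unfolding guarded_def by auto
  then show "step E c J ct (pos, K) (Place j v) = Some (pos(j := Some v), K)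
      \<and> guarded E (pos(j := Some v), K)"
    using assms(1-3) recont_eq[of K K E] unfolding guarded_def by simp
qed

lemma guarded_run_Remove_shrink:
  assumes "j \<in> J" "pos j \<noteq> None" "X' \<subseteq> X"
    and "boundary E X' \<subseteq> occupied (pos(j := None))"
    and "\<forall>e\<in>induced_edges E X - induced_edges E X'.
      \<exists>x\<in>e. x \<in> boundary E X - occupied (pos(j := None))"
    and "guarded_run E c J ct (pos(j := None), induced_edges E X') ms s'"
  shows "guarded_run E c J ct (pos, induced_edges E X) (Remove j # ms) s'"
proof (rule guarded_run_Cons[OF _ assms(6)])
  let ?O = "occupied (pos(j := None))"
  have front: "frontier E (induced_edges E X') \<subseteq> ?O"
    by (rule order_trans[OF frontier_induced_edges_subset_boundary assms(4)])
  have sub: "induced_edges E X' \<subseteq> induced_edges E X"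
    using assms(3) unfolding induced_edges_def by blast
  have "\<forall>e\<in>induced_edges E X - induced_edges E X'. \<exists>x\<in>e. x \<notin> ?O
      \<and> (\<exists>f\<in>E - induced_edges E X. x \<in> f)"
    using assms(5) boundary_contaminated_edge by (metis Diff_iff)
  then have "recont E ?O (induced_edges E X) = induced_edges E X'"
    by (rule recont_eq[OF sub front])
  then show "step E c J ct (pos, induced_edges E X) (Remove j)
      = Some (pos(j := None), induced_edges E X') \<and> guarded E (pos(j := None), induced_edges E X')"
    using assms(1,2) front unfolding guarded_def by simp
qed

lemma guarded_run_Remove:
  assumes "j \<in> J" "pos j \<noteq> None" "boundary E X \<subseteq> occupied (pos(j := None))"
    and "guarded_run E c J ct (pos(j := None), induced_edges E X) ms s'"
  shows "guarded_run E c J ct (pos, induced_edges E X) (Remove j # ms) s'"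
  using guarded_run_Remove_shrink[OF assms(1,2) order_refl assms(3)] assms(4) by simp

lemma guarded_run_Remove_drop:
  assumes "j \<in> J" "pos j \<noteq> None"
    and "v \<in> boundary E (insert v X)" "v \<notin> occupied (pos(j := None))"
    and "boundary E X \<subseteq> occupied (pos(j := None))"
    and "guarded_run E c J ct (pos(j := None), induced_edges E X) ms s'"
  shows "guarded_run E c J ct (pos, induced_edges E (insert v X)) (Remove j # ms) s'"
proof (rule guarded_run_Remove_shrink[OF assms(1,2) _ assms(5) _ assms(6)])
  show "\<forall>e\<in>induced_edges E (insert v X) - induced_edges E X.
      \<exists>x\<in>e. x \<in> boundary E (insert v X) - occupied (pos(j := None))"
    using assms(3,4) unfolding induced_edges_def by blast
qed blast

lemma guarded_run_Slide:
  assumes "j \<in> J" "pos j = Some u" "{u, v} \<in> E" "ct j = c {u, v}" "u \<in> X"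
    and "\<forall>f\<in>E. v \<in> f \<longrightarrow> f \<subseteq> insert v X \<longrightarrow> f = {u, v}"
    and "boundary E (insert v X) \<subseteq> occupied (pos(j := Some v))"
    and "guarded_run E c J ct (pos(j := Some v), induced_edges E (insert v X)) ms s'"
  shows "guarded_run E c J ct (pos, induced_edges E X) (Slide j u v # ms) s'"
proof (rule guarded_run_Cons[OF _ assms(8)])
  have front: "frontier E (induced_edges E (insert v X)) \<subseteq> occupied (pos(j := Some v))"
    by (rule order_trans[OF frontier_induced_edges_subset_boundary assms(7)])
  have "recont E (occupied (pos(j := Some v))) (induced_edges E (insert v X))
      = induced_edges E (insert v X)"
    by (rule recont_eq[OF order_refl front]) simp
  then show "step E c J ct (pos, induced_edges E X) (Slide j u v)
      = Some (pos(j := Some v), induced_edges E (insert v X))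
      \<and> guarded E (pos(j := Some v), induced_edges E (insert v X))"
    using assms(1-4) front induced_edges_insert[OF assms(3,5,6)] unfolding guarded_def by simp
qed

section \<open>The tree T_l\<close>

lemma T_edges_eq:
  "T_edges l =
     {{Q i, A i j} | i j. i \<in> {1, 2} \<and> j < 3}
   \<union> {{A i j, B i j k} | i j k. i \<in> {1, 2} \<and> j < 3 \<and> k < 3}
   \<union> {{Q 1, Pv 1}, {Pv 1, V 0}, {V 0, Pv 3}, {Pv 3, Q 2}}
   \<union> {{V x, V (x + 1)} | x. x \<le> l}
   \<union> {{V x, W x 0} | x. 1 \<le> x \<and> x \<le> l}
   \<union> {{V x, W x 1} | x. 1 \<le> x \<and> x \<le> l}"
  unfolding T_edges_def T_labeled_def image_Un by (simp add: image_Collect)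

lemma ball_T_edges:
  "(\<forall>f\<in>T_edges l. P f) \<longleftrightarrow>
     (\<forall>i\<in>{1, 2}. \<forall>j<3. P {Q i, A i j} \<and> (\<forall>k<3. P {A i j, B i j k}))
     \<and> P {Q 1, Pv 1} \<and> P {Pv 1, V 0} \<and> P {V 0, Pv 3} \<and> P {Pv 3, Q 2}
     \<and> (\<forall>x\<le>l. P {V x, V (Suc x)})
     \<and> (\<forall>x. 1 \<le> x \<and> x \<le> l \<longrightarrow> P {V x, W x 0} \<and> P {V x, W x 1})"
  unfolding T_edges_eq ball_Un ball_simps by (simp add: Ball_def imp_ex) blast

lemma T_labeled_functional:
  "(e, k) \<in> T_labeled l \<Longrightarrow> (e, k') \<in> T_labeled l \<Longrightarrow> k = k'"
  unfolding T_labeled_def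
  by (elim UnE CollectE exE conjE insertE emptyE) (auto simp: doubleton_eq_iff)

lemma T_color_eq: "(e, k) \<in> T_labeled l \<Longrightarrow> T_color l e = k"
  unfolding T_color_def by (rule the_equality) (auto intro: T_labeled_functional)

(* Keep the numeral 1 (searcher 1, Q 1, W x 1, colour 1) from being rewritten to Suc 0,
   so that the simplification rules below apply as stated. *)
declare One_nat_def [simp del]

lemma T_labeled_mem:
  "i \<in> {1, 2} \<Longrightarrow> j < 3 \<Longrightarrow> ({Q i, A i j}, 1) \<in> T_labeled l"
  "i \<in> {1, 2} \<Longrightarrow> j < 3 \<Longrightarrow> k < 3 \<Longrightarrow> ({A i j, B i j k}, 2) \<in> T_labeled l"
  "({Q 1, Pv 1}, 3) \<in> T_labeled l" "({Pv 1, V 0}, 2) \<in> T_labeled l"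
  "({V 0, Pv 3}, 2) \<in> T_labeled l" "({Pv 3, Q 2}, 3) \<in> T_labeled l"
  "x \<le> l \<Longrightarrow> ({V x, V (Suc x)}, x mod 3 + 1) \<in> T_labeled l"
  "1 \<le> x \<Longrightarrow> x \<le> l \<Longrightarrow> ({V x, W x 0}, x mod 3 + 1) \<in> T_labeled l"
  "1 \<le> x \<Longrightarrow> x \<le> l \<Longrightarrow> ({V x, W x 1}, (x - 1) mod 3 + 1) \<in> T_labeled l"
  by (auto simp: T_labeled_def doubleton_eq_iff)

lemma T_labeled_edge: "(e, k) \<in> T_labeled l \<Longrightarrow> e \<in> T_edges l"
  unfolding T_edges_def by (rule image_eqI[where x="(e, k)"]) simp_all

lemmas T_edges_mem [simp] = T_labeled_mem[THEN T_labeled_edge]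
lemmas T_color_simps [simp] = T_labeled_mem[THEN T_color_eq]

lemma T_vcolors [simp]:
  "i \<in> {1, 2} \<Longrightarrow> 1 \<in> vcolors (T_edges l) (T_color l) (Q i)"
  "3 \<in> vcolors (T_edges l) (T_color l) (Q 1)"
  "3 \<in> vcolors (T_edges l) (T_color l) (Q 2)"
  "i \<in> {1, 2} \<Longrightarrow> j < 3 \<Longrightarrow> 2 \<in> vcolors (T_edges l) (T_color l) (A i j)"
  "2 \<in> vcolors (T_edges l) (T_color l) (Pv 1)"
  "2 \<in> vcolors (T_edges l) (T_color l) (Pv 3)"
  "3 \<in> vcolors (T_edges l) (T_color l) (Pv 3)"
  "x \<le> l \<Longrightarrow> x mod 3 + 1 = k \<Longrightarrow> k \<in> vcolors (T_edges l) (T_color l) (V x)"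
proof -
  have edge: "k \<in> vcolors (T_edges l) (T_color l) v"
    if "{v, w} \<in> T_edges l" "T_color l {v, w} = k" for v w k
    using that unfolding vcolors_def by blast
  show "i \<in> {1, 2} \<Longrightarrow> 1 \<in> vcolors (T_edges l) (T_color l) (Q i)"
    by (rule edge[of _ "A i 0"]) simp_all
  show "3 \<in> vcolors (T_edges l) (T_color l) (Q 1)"
    by (rule edge[of _ "Pv 1"]) simp_all
  show "3 \<in> vcolors (T_edges l) (T_color l) (Q 2)"
    by (rule edge[of _ "Pv 3"]) (simp_all add: insert_commute)
  show "i \<in> {1, 2} \<Longrightarrow> j < 3 \<Longrightarrow> 2 \<in> vcolors (T_edges l) (T_color l) (A i j)"
    by (rule edge[of _ "B i j 0"]) simp_all
  show "2 \<in> vcolors (T_edges l) (T_color l) (Pv 1)"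
    by (rule edge[of _ "V 0"]) simp_all
  show "2 \<in> vcolors (T_edges l) (T_color l) (Pv 3)"
    by (rule edge[of _ "V 0"]) (simp_all add: insert_commute)
  show "3 \<in> vcolors (T_edges l) (T_color l) (Pv 3)"
    by (rule edge[of _ "Q 2"]) simp_all
  show "x \<le> l \<Longrightarrow> x mod 3 + 1 = k \<Longrightarrow> k \<in> vcolors (T_edges l) (T_color l) (V x)"
    by (rule edge[of _ "V (Suc x)"]) simp_all
qed

definition searchers :: "'v option \<Rightarrow> 'v option \<Rightarrow> 'v option \<Rightarrow> nat \<Rightarrow> 'v option" where
  "searchers o1 o2 o3 j = (if j = 1 then o1 else if j = 2 then o2 else if j = 3 then o3 else None)"

lemma searchers_apply [simp]:
  "searchers o1 o2 o3 1 = o1" "searchers o1 o2 o3 2 = o2" "searchers o1 o2 o3 3 = o3"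
  by (simp_all add: searchers_def)

lemma searchers_update [simp]:
  "(searchers o1 o2 o3)(1 := w) = searchers w o2 o3"
  "(searchers o1 o2 o3)(2 := w) = searchers o1 w o3"
  "(searchers o1 o2 o3)(3 := w) = searchers o1 o2 w"
  by (auto simp: searchers_def)

lemma occupied_searchers [simp]:
  "occupied (searchers o1 o2 o3) = set_option o1 \<union> set_option o2 \<union> set_option o3"
proof (intro set_eqI iffI)
  fix v assume "v \<in> occupied (searchers o1 o2 o3)"
  then obtain j where "searchers o1 o2 o3 j = Some v" unfolding occupied_def by blast
  then show "v \<in> set_option o1 \<union> set_option o2 \<union> set_option o3"
    unfolding searchers_def by (auto split: if_splits)
next
  fix v assume "v \<in> set_option o1 \<union> set_option o2 \<union> set_option o3"
  then have "o1 = Some v \<or> o2 = Some v \<or> o3 = Some v" by auto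
  then have "\<exists>j. searchers o1 o2 o3 j = Some v" using searchers_apply by metis
  then show "v \<in> occupied (searchers o1 o2 o3)" unfolding occupied_def by simp
qed

section \<open>The strategy\<close>

abbreviation T_run :: "nat \<Rightarrow> (nat \<Rightarrow> tv option) \<times> tv set set \<Rightarrow> tv move list
    \<Rightarrow> (nat \<Rightarrow> tv option) \<times> tv set set \<Rightarrow> bool" where
  "T_run l \<equiv> guarded_run (T_edges l) (T_color l) {1, 2, 3} (\<lambda>j. j)"

abbreviation T_clean :: "nat \<Rightarrow> tv set \<Rightarrow> tv set set" where
  "T_clean l \<equiv> induced_edges (T_edges l)"

lemmas T_run_rules = guarded_run_Place guarded_run_Slide guarded_run_Remove guarded_run_Nil

lemma less_3_iff: "(k::nat) < 3 \<longleftrightarrow> k = 0 \<or> k = 1 \<or> k = 2"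
  by auto

definition subtree :: "nat \<Rightarrow> tv set" where
  "subtree i = {Q i} \<union> {A i j | j. j < 3} \<union> {B i j k | j k. j < 3 \<and> k < 3}"

lemma mem_subtree [simp]:
  "Q i' \<in> subtree i \<longleftrightarrow> i' = i"
  "A i' j \<in> subtree i \<longleftrightarrow> i' = i \<and> j < 3"
  "B i' j k \<in> subtree i \<longleftrightarrow> i' = i \<and> j < 3 \<and> k < 3"
  "Pv n \<notin> subtree i" "V y \<notin> subtree i" "W y k \<notin> subtree i"
  unfolding subtree_def by auto

lemma boundary_subtree: "boundary (T_edges l) (subtree i) \<subseteq> {Q i}"
  by (auto simp: boundary_subset_iff ball_T_edges)

definition clear_branch :: "nat \<Rightarrow> nat \<Rightarrow> tv move list" where
  "clear_branch i j = [Place 1 (Q i), Slide 1 (Q i) (A i j),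
     Place 2 (A i j), Slide 2 (A i j) (B i j 0), Remove 2,
     Place 2 (A i j), Slide 2 (A i j) (B i j 1), Remove 2,
     Place 2 (A i j), Slide 2 (A i j) (B i j 2), Remove 2, Remove 1]"

lemma run_clear_branch:
  assumes "i \<in> {1, 2}" "j < 3" "Q i \<in> X" "A i j \<notin> X" "\<forall>k. B i j k \<notin> X"
    and "boundary (T_edges l) X \<subseteq> {Q i}"
  shows "T_run l (searchers None None (Some (Q i)), T_clean l X) (clear_branch i j)
     (searchers None None (Some (Q i)), T_clean l (X \<union> {A i j, B i j 0, B i j 1, B i j 2}))"
  unfolding clear_branch_def
  \<comment> \<open>Execute the moves one by one; the boundary of each enlarged region is bounded through
    the known boundary of X, so only the newly added vertices have to be inspected.\<close>
  apply (intro T_run_rules; (rule boundary_subsetI[OF assms(6)])?)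
  using assms by (auto simp: ball_T_edges)

definition clear_subtree :: "nat \<Rightarrow> tv move list" where
  "clear_subtree i = clear_branch i 0 @ clear_branch i 1 @ clear_branch i 2"

lemma run_clear_subtree:
  assumes "i \<in> {1, 2}" "Q i \<in> X" "\<forall>j k. A i j \<notin> X \<and> B i j k \<notin> X"
    and "boundary (T_edges l) X \<subseteq> {Q i}"
  shows "T_run l (searchers None None (Some (Q i)), T_clean l X) (clear_subtree i)
     (searchers None None (Some (Q i)), T_clean l (X \<union> subtree i))"
proof -
  define Y where "Y j = X \<union> {A i j' | j'. j' < j} \<union> {B i j' k | j' k. j' < j \<and> k < 3}" for j
  have branch: "T_run l (searchers None None (Some (Q i)), T_clean l (Y j)) (clear_branch i j)
      (searchers None None (Some (Q i)), T_clean l (Y (j + 1)))" if "j < 3" for j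
  proof -
    have "Q i \<in> Y j" "A i j \<notin> Y j" "\<forall>k. B i j k \<notin> Y j"
      using assms(2,3) unfolding Y_def by auto
    moreover have "boundary (T_edges l) (Y j) \<subseteq> {Q i}"
      by (rule boundary_subsetI[OF assms(4)]) (use assms(2,3) that in \<open>auto simp: Y_def ball_T_edges\<close>)
    moreover have "Y j \<union> {A i j, B i j 0, B i j 1, B i j 2} = Y (j + 1)"
      unfolding Y_def by (auto simp: less_3_iff)
    ultimately show ?thesis
      using run_clear_branch[OF assms(1) that, of "Y j"] by simp
  qed
  have "T_run l (searchers None None (Some (Q i)), T_clean l (Y 0)) (clear_subtree i)
      (searchers None None (Some (Q i)), T_clean l (Y 3))"
    unfolding clear_subtree_def
    using branch[of 0] branch[of 1] branch[of 2] by (simp add: guarded_run_append)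
  moreover have "Y 0 = X" "Y 3 = X \<union> subtree i"
    using assms(2) unfolding Y_def subtree_def by auto
  ultimately show ?thesis by simp
qed

definition path_region :: "nat \<Rightarrow> tv set" where
  "path_region x = subtree 1 \<union> {Pv 1, Pv 3} \<union> {V y | y. y \<le> x}
     \<union> {W y k | y k. 0 < y \<and> y < x \<and> k < 2}"

lemma mem_path_region [simp]:
  "Q i \<in> path_region x \<longleftrightarrow> i = 1"
  "A i j \<in> path_region x \<longleftrightarrow> i = 1 \<and> j < 3"
  "B i j k \<in> path_region x \<longleftrightarrow> i = 1 \<and> j < 3 \<and> k < 3"
  "Pv n \<in> path_region x \<longleftrightarrow> n = 1 \<or> n = 3"
  "V y \<in> path_region x \<longleftrightarrow> y \<le> x"
  "W y k \<in> path_region x \<longleftrightarrow> 0 < y \<and> y < x \<and> k < 2"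
  unfolding path_region_def by auto

lemma path_region_Suc:
  "0 < x \<Longrightarrow> path_region (Suc x) = insert (V (Suc x)) (insert (W x 0) (insert (W x 1) (path_region x)))"
  unfolding path_region_def by (auto simp: less_Suc_eq)

lemma boundary_path_region: "x \<le> Suc l \<Longrightarrow> boundary (T_edges l) (path_region x) \<subseteq> {V x, Pv 3}"
  by (auto simp: boundary_subset_iff ball_T_edges)

definition clear_pendants :: "nat \<Rightarrow> nat \<Rightarrow> nat \<Rightarrow> tv move list" where
  "clear_pendants p q x = [Place p (V x), Slide p (V x) (W x 0), Remove p,
     Place p (V x), Slide q (V x) (W x 1), Remove q]"

lemma run_block_mod1:
  assumes "0 < x" "x \<le> l" "x mod 3 = 1"
  shows "T_run l (searchers (Some (V x)) None (Some (Q 2)), T_clean l (insert (Q 2) (path_region x)))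
     (clear_pendants 2 1 x @ [Place 1 (Q 2), Remove 3, Slide 2 (V x) (V (Suc x))])
     (searchers (Some (Q 2)) (Some (V (Suc x))) None, T_clean l (insert (Q 2) (path_region (Suc x))))"
proof -
  have "(x - 1) mod 3 = 0" using assms by (cases x) (auto simp: mod_Suc split: if_splits)
  show ?thesis
    unfolding clear_pendants_def append.simps
    apply (intro T_run_rules; (rule boundary_subsetI[OF boundary_path_region[of x l]])?)
    using assms \<open>(x - 1) mod 3 = 0\<close> by (auto simp: ball_T_edges path_region_Suc)
qed

lemma run_block_mod2:
  assumes "0 < x" "x \<le> l" "x mod 3 = 2"
  shows "T_run l (searchers (Some (Q 2)) (Some (V x)) None, T_clean l (insert (Q 2) (path_region x)))
     (clear_pendants 3 2 x @ [Place 2 (Pv 3), Remove 1, Slide 3 (V x) (V (Suc x))])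
     (searchers None (Some (Pv 3)) (Some (V (Suc x))), T_clean l (path_region (Suc x)))"
proof -
  have pred: "(x - 1) mod 3 = 1" using assms by (cases x) (auto simp: mod_Suc split: if_splits)
  let ?Y = "insert (W x 1) (insert (W x 0) (path_region x))"
  have pendants: "T_run l (searchers (Some (Q 2)) (Some (V x)) None, T_clean l (insert (Q 2) (path_region x)))
     (clear_pendants 3 2 x @ [Place 2 (Pv 3)])
     (searchers (Some (Q 2)) (Some (Pv 3)) (Some (V x)), T_clean l (insert (Q 2) ?Y))"
    unfolding clear_pendants_def append.simps
    apply (intro T_run_rules; (rule boundary_subsetI[OF boundary_path_region[of x l]])?)
    using assms pred by (auto simp: ball_T_edges)
  have advance: "T_run l (searchers (Some (Q 2)) (Some (Pv 3)) (Some (V x)), T_clean l (insert (Q 2) ?Y))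
     [Remove 1, Slide 3 (V x) (V (Suc x))]
     (searchers None (Some (Pv 3)) (Some (V (Suc x))), T_clean l (path_region (Suc x)))"
  proof -
    \<comment> \<open>Releasing q_2 recontaminates the edge p_3 q_2, which leaves the clean region.\<close>
    have Q2: "Q 2 \<in> boundary (T_edges l) (insert (Q 2) ?Y)"
      unfolding boundary_def by (auto intro!: bexI[of _ "{Q 2, A 2 0}"])
    show ?thesis
      apply (intro guarded_run_Remove_drop[OF _ _ Q2] T_run_rules;
          (rule boundary_subsetI[OF boundary_path_region[of x l]])?)
      using assms by (auto simp: ball_T_edges path_region_Suc)
  qed
  show ?thesis using guarded_run_append[OF pendants advance] by simp
qed

lemma run_block_mod0:
  assumes "0 < x" "x \<le> l" "x mod 3 = 0"
  shows "T_run l (searchers None (Some (Pv 3)) (Some (V x)), T_clean l (path_region x))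
     (clear_pendants 1 3 x @ [Place 3 (Pv 3), Slide 3 (Pv 3) (Q 2), Remove 2, Slide 1 (V x) (V (Suc x))])
     (searchers (Some (V (Suc x))) None (Some (Q 2)), T_clean l (insert (Q 2) (path_region (Suc x))))"
proof -
  have pred: "(x - 1) mod 3 = 2" using assms by (cases x) (auto simp: mod_Suc split: if_splits)
  show ?thesis
    unfolding clear_pendants_def append.simps
    apply (intro T_run_rules; (rule boundary_subsetI[OF boundary_path_region[of x l]])?)
    using assms pred by (auto simp: ball_T_edges path_region_Suc)
qed

definition sweep_pos :: "nat \<Rightarrow> nat \<Rightarrow> tv option" where
  "sweep_pos x =
     (if x mod 3 = 1 then searchers (Some (V x)) None (Some (Q 2))
      else if x mod 3 = 2 then searchers (Some (Q 2)) (Some (V x)) None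
      else searchers None (Some (Pv 3)) (Some (V x)))"

definition sweep_region :: "nat \<Rightarrow> tv set" where
  "sweep_region x = (if x mod 3 = 0 then path_region x else insert (Q 2) (path_region x))"

definition block :: "nat \<Rightarrow> tv move list" where
  "block x =
     (if x mod 3 = 1 then clear_pendants 2 1 x @ [Place 1 (Q 2), Remove 3, Slide 2 (V x) (V (Suc x))]
      else if x mod 3 = 2 then clear_pendants 3 2 x @ [Place 2 (Pv 3), Remove 1, Slide 3 (V x) (V (Suc x))]
      else clear_pendants 1 3 x @ [Place 3 (Pv 3), Slide 3 (Pv 3) (Q 2), Remove 2, Slide 1 (V x) (V (Suc x))])"

lemma run_block:
  assumes "0 < x" "x \<le> l"
  shows "T_run l (sweep_pos x, T_clean l (sweep_region x)) (block x)
     (sweep_pos (Suc x), T_clean l (sweep_region (Suc x)))"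
proof -
  consider "x mod 3 = 1" | "x mod 3 = 2" | "x mod 3 = 0" by force
  then show ?thesis
  proof cases
    case 1
    then have "Suc x mod 3 = 2" by (simp add: mod_Suc)
    with 1 show ?thesis
      using run_block_mod1[OF assms 1] by (simp add: sweep_pos_def sweep_region_def block_def)
  next
    case 2
    then have "Suc x mod 3 = 0" by (simp add: mod_Suc)
    with 2 show ?thesis
      using run_block_mod2[OF assms 2] by (simp add: sweep_pos_def sweep_region_def block_def)
  next
    case 3
    then have "Suc x mod 3 = 1" by (simp add: mod_Suc)
    with 3 show ?thesis
      using run_block_mod0[OF assms 3] by (simp add: sweep_pos_def sweep_region_def block_def)
  qed
qed

fun sweep :: "nat \<Rightarrow> tv move list" where
  "sweep 0 = []"
| "sweep (Suc n) = sweep n @ block (Suc n)"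

lemma run_sweep:
  "n \<le> l \<Longrightarrow> T_run l (sweep_pos (Suc 0), T_clean l (sweep_region (Suc 0))) (sweep n)
     (sweep_pos (Suc n), T_clean l (sweep_region (Suc n)))"
proof (induction n)
  case 0
  show ?case by (simp add: guarded_run_Nil)
next
  case (Suc n)
  then show ?case using guarded_run_append run_block[of "Suc n" l] by simp
qed

definition cross_to_path :: "tv move list" where
  "cross_to_path = [Slide 3 (Q 1) (Pv 1), Place 2 (Pv 1), Slide 2 (Pv 1) (V 0), Remove 3,
     Place 1 (V 0), Slide 2 (V 0) (Pv 3), Place 3 (Pv 3), Slide 3 (Pv 3) (Q 2), Remove 2,
     Slide 1 (V 0) (V (Suc 0))]"

lemma run_cross_to_path:
  "T_run l (searchers None None (Some (Q 1)), T_clean l (subtree 1)) cross_to_path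
     (sweep_pos (Suc 0), T_clean l (sweep_region (Suc 0)))"
proof -
  have start: "sweep_pos (Suc 0) = searchers (Some (V (Suc 0))) None (Some (Q 2))"
    "sweep_region (Suc 0) = insert (Q 2) (path_region (Suc 0))"
    by (simp_all add: sweep_pos_def sweep_region_def One_nat_def)
  have path_region_1:
    "path_region (Suc 0) = insert (V (Suc 0)) (insert (V 0) (insert (Pv 3) (insert (Pv 1) (subtree 1))))"
    unfolding path_region_def by auto
  show ?thesis
    unfolding cross_to_path_def start
    apply (intro T_run_rules; (rule boundary_subsetI[OF boundary_subtree])?)
    by (auto simp: ball_T_edges path_region_1)
qed

definition gather_at_Q2 :: "nat \<Rightarrow> tv move list" where
  "gather_at_Q2 x =
     (if x mod 3 = 1 then [Remove 1]
      else if x mod 3 = 2 then [Remove 2, Place 3 (Q 2), Remove 1]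
      else [Remove 3, Place 3 (Pv 3), Slide 3 (Pv 3) (Q 2), Remove 2])"

lemma run_gather_at_Q2:
  "T_run l (sweep_pos (Suc l), T_clean l (sweep_region (Suc l))) (gather_at_Q2 (Suc l))
     (searchers None None (Some (Q 2)), T_clean l (insert (Q 2) (path_region (Suc l))))"
proof -
  note bound = boundary_subsetI[OF boundary_path_region[of "Suc l" l]]
  consider "Suc l mod 3 = 1" | "Suc l mod 3 = 2" | "Suc l mod 3 = 0" by force
  then show ?thesis
    unfolding sweep_pos_def sweep_region_def gather_at_Q2_def
    by cases ((simp, intro T_run_rules; (rule bound)?); auto simp: ball_T_edges)+
qed

definition strategy :: "nat \<Rightarrow> tv move list" where
  "strategy l = [Place 3 (Q 1)] @ clear_subtree 1 @ cross_to_path @ sweep l @ gather_at_Q2 (Suc l)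
     @ clear_subtree 2"

lemma run_strategy:
  "T_run l (searchers None None None, T_clean l {Q 1}) (strategy l)
     (searchers None None (Some (Q 2)), T_edges l)"
proof -
  have "T_run l (searchers None None None, T_clean l {Q 1}) [Place 3 (Q 1)]
      (searchers None None (Some (Q 1)), T_clean l {Q 1})"
    by (intro T_run_rules) simp_all
  moreover have "T_run l (searchers None None (Some (Q 1)), T_clean l {Q 1}) (clear_subtree 1)
      (searchers None None (Some (Q 1)), T_clean l (subtree 1))"
    using run_clear_subtree[of 1 "{Q 1}" l] boundary_subset[of _ "{Q 1}"] by (simp add: insert_absorb)
  moreover have "T_run l (searchers None None (Some (Q 2)), T_clean l (insert (Q 2) (path_region (Suc l))))
      (clear_subtree 2) (searchers None None (Some (Q 2)), T_edges l)"
  proof -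
    have "boundary (T_edges l) (insert (Q 2) (path_region (Suc l))) \<subseteq> {Q 2}"
      by (rule boundary_subsetI[OF boundary_path_region[of "Suc l" l]]) (auto simp: ball_T_edges)
    moreover have "T_clean l (insert (Q 2) (path_region (Suc l)) \<union> subtree 2) = T_edges l"
      by (simp add: induced_edges_eq_iff ball_T_edges)
    ultimately show ?thesis using run_clear_subtree[of 2 "insert (Q 2) (path_region (Suc l))" l] by simp
  qed
  moreover note run_cross_to_path run_sweep[of l l, OF order_refl] run_gather_at_Q2[of l]
  ultimately show ?thesis
    unfolding strategy_def by (meson guarded_run_append)
qed

theorem lemma3p6:
  fixes l :: nat
  assumes "l \<ge> 3"
  shows "\<exists>ms. search_strategy (T_edges l) (T_color l) {1, 2, 3} (\<lambda>j. j) ms"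
proof -
  \<comment> \<open>The strategy works for every l.\<close>
  have "T_clean l {Q 1} = {}"
    using ball_T_edges[of l "\<lambda>f. \<not> f \<subseteq> {Q 1}"] unfolding induced_edges_def by auto
  then have initial: "(\<lambda>_. None, {}) = (searchers None None None, T_clean l {Q 1})"
    by (simp add: searchers_def fun_eq_iff)
  have "guarded (T_edges l) (\<lambda>_. None, {})"
    unfolding guarded_def frontier_def by simp
  then have "run (T_edges l) (T_color l) {1, 2, 3} (\<lambda>j. j) (\<lambda>_. None, {}) (strategy l)
      = Some (searchers None None (Some (Q 2)), T_edges l)"
    using run_strategy[of l] unfolding initial guarded_run_def by blast
  then show ?thesis unfolding search_strategy_def by blast
qed

end
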